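(* (i) $\mathfrak{L}$ is a system of representatives of $\mathfrak{H}/\!\sim$. (ii) If $\underline h,\underline h'\in\mathfrak{H}$ and $\underline h\sim\underline h'$, then $J^{\underline h}=J^{\underline h'}$ and $\mathfrak{S}^{\underline h}=\mathfrak{S}^{\underline h'}$. (iii) If $\underline\ell,\underline\ell'\in\mathfrak{L}$ and $\underline\ell\ne\underline\ell'$, then $\mathfrak{S}^{\underline\ell}\cap\mathfrak{S}^{\underline\ell'}=\emptyset$. (iv) For each $\underline\ell\in\mathfrak{L}$, the map $m\in\mathfrak{S}^{\underline\ell}\mapsto m^2\bmod 4P$ is constant.
   Context: $r\ge3$; $p_1,\dots,p_r$ positive pairwise coprime, $p_2,\dots,p_r$ odd; $P=p_1\cdots p_r$, $\hat p_j=P/p_j$; $E=\{\pm1\}^r$. $\mathfrak{H}$: $\underline h\in\mathbb{Z}^r$ with $0\le h_j\le p_j$ and $h_j/p_j\notin\mathbb{Z}$ for at least three $j$; $\mathfrak{L}$: those with $h_j$ even for $j\ge2$. $J^{\underline h}=\{j:p_j\mid h_j\}$; $\mathcal{N}^{\underline h}(\underline\varepsilon)=P+\sum_j\varepsilon_jh_j\hat p_j$; $\mathfrak{S}^{\underline h}=\mathcal{N}^{\underline h}(E)+2P\mathbb{Z}$. Equivalence: $\underline h\sim\underline h'$ iff there is $J\subset\{1,\dots,r\}$ with $|J|$ even such that $h_j=p_j-h'_j$ for $j\in J$ and $h_j=h'_j$ for $j\notin J$. *)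

theory Defs
  imports "HOL-Library.FuncSet"
begin

text \<open>Tuples indexed by {1..r} are extensional functions nat => int.\<close>

definition bigP :: "nat \<Rightarrow> (nat \<Rightarrow> int) \<Rightarrow> int" where
  "bigP r p = (\<Prod>j\<in>{1..r}. p j)"

definition phat :: "nat \<Rightarrow> (nat \<Rightarrow> int) \<Rightarrow> nat \<Rightarrow> int" where
  "phat r p j = bigP r p div p j"

definition signsE :: "nat \<Rightarrow> (nat \<Rightarrow> int) set" where
  "signsE r = ({1..r} \<rightarrow>\<^sub>E {-1, 1})"

definition frakH :: "nat \<Rightarrow> (nat \<Rightarrow> int) \<Rightarrow> (nat \<Rightarrow> int) set" where
  "frakH r p = {h. h \<in> extensional {1..r} \<and> (\<forall>j\<in>{1..r}. 0 \<le> h j \<and> h j \<le> p j)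
                 \<and> card {j\<in>{1..r}. \<not> p j dvd h j} \<ge> 3}"

definition frakL :: "nat \<Rightarrow> (nat \<Rightarrow> int) \<Rightarrow> (nat \<Rightarrow> int) set" where
  "frakL r p = {h\<in>frakH r p. \<forall>j\<in>{2..r}. even (h j)}"

definition Jset :: "nat \<Rightarrow> (nat \<Rightarrow> int) \<Rightarrow> (nat \<Rightarrow> int) \<Rightarrow> nat set" where
  "Jset r p h = {j\<in>{1..r}. p j dvd h j}"

definition calN :: "nat \<Rightarrow> (nat \<Rightarrow> int) \<Rightarrow> (nat \<Rightarrow> int) \<Rightarrow> (nat \<Rightarrow> int) \<Rightarrow> int" where
  "calN r p h \<epsilon> = bigP r p + (\<Sum>j\<in>{1..r}. \<epsilon> j * h j * phat r p j)"

definition frakS :: "nat \<Rightarrow> (nat \<Rightarrow> int) \<Rightarrow> (nat \<Rightarrow> int) \<Rightarrow> int set" where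
  "frakS r p h = {m. \<exists>\<epsilon>\<in>signsE r. \<exists>k::int. m = calN r p h \<epsilon> + 2 * bigP r p * k}"

definition hsim :: "nat \<Rightarrow> (nat \<Rightarrow> int) \<Rightarrow> (nat \<Rightarrow> int) \<Rightarrow> (nat \<Rightarrow> int) \<Rightarrow> bool" where
  "hsim r p h h' \<longleftrightarrow> (\<exists>J. J \<subseteq> {1..r} \<and> even (card J)
      \<and> (\<forall>j\<in>J. h j = p j - h' j) \<and> (\<forall>j\<in>{1..r} - J. h j = h' j))"

end

theory Submission
  imports Defs
begin

(*
  Replacing h_j by p_j - h_j on an even set J of indices, and flipping the signs eps_j
  there, changes N(eps) by P times a sum of |J| signs, an even number; so equivalent
  tuples have the same J and S. Since p_j is odd for j >= 2, exactly one of h_j and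
  p_j - h_j is even, and index 1 absorbs the parity of |J|: this gives the unique
  representative in L. If two representatives share an element of S, their difference
  sum_j (eps_j l_j - eps'_j l'_j) phat_j is divisible by 2P; reducing mod p_j for j >= 2
  (evenness of l_j, l'_j supplies a factor 2) and then mod 2 p_1 isolates one coordinate
  at a time and forces l = l'. Finally, N(eps)^2 mod 4P does not depend on eps because P
  divides phat_i phat_j for i <> j.
*)

lemma even_card_sym_diff:
  assumes "finite A" "finite B" "even (card A)" "even (card B)"
  shows "even (card ((A - B) \<union> (B - A)))"
proof -
  have "card ((A - B) \<union> (B - A)) = card (A - B) + card (B - A)"
    using assms(1,2) by (intro card_Un_disjoint) auto
  moreover have "card A = card (A \<inter> B) + card (A - B)" "card B = card (B \<inter> A) + card (B - A)"
    using assms(1,2) by (simp_all add: card_Int_Diff)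
  moreover have "B \<inter> A = A \<inter> B"
    by blast
  ultimately show ?thesis using assms(3,4) by auto
qed

lemma even_sum_signs:
  assumes "finite J" "\<And>j. j \<in> J \<Longrightarrow> e j \<in> {-1, 1::int}" "even (card J)"
  shows "even (\<Sum>j\<in>J. e j)"
proof -
  have "(\<Sum>j\<in>J. e j) = (\<Sum>j\<in>J. e j - 1) + int (card J)"
    by (simp add: sum_subtractf)
  moreover have "even (e j - 1)" if "j \<in> J" for j
    using assms(2)[OF that] by auto
  then have "even (\<Sum>j\<in>J. e j - 1)"
    by (intro dvd_sum)
  ultimately show ?thesis using assms(3) by simp
qed

lemma signed_eq_if_double_dvd:
  fixes q a b e e' :: int
  assumes "0 \<le> a" "a \<le> q" "0 \<le> b" "b \<le> q" "e \<in> {-1, 1}" "e' \<in> {-1, 1}"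
    and dvd: "2 * q dvd e * a - e' * b"
  shows "a = b"
proof -
  have diff: "a = b" if "2 * q dvd a - b"
  proof (rule ccontr)
    assume "a \<noteq> b"
    then have "\<bar>2 * q\<bar> \<le> \<bar>a - b\<bar>"
      using that by (intro dvd_imp_le_int) auto
    then show False
      using \<open>a \<noteq> b\<close> assms(1-4) by arith
  qed
  have sum: "a = b" if "2 * q dvd a + b"
  proof (cases "a + b = 0")
    case False
    then have "\<bar>2 * q\<bar> \<le> \<bar>a + b\<bar>"
      using that by (intro dvd_imp_le_int)
    then show ?thesis
      using assms(1-4) by arith
  qed (use assms(1,3) in arith)
  have "e * a - e' * b \<in> {a - b, a + b, - (a + b), - (a - b)}"
    using assms(5,6) by auto
  then have "2 * q dvd a - b \<or> 2 * q dvd a + b"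
    using dvd by (auto simp only: insert_iff empty_iff dvd_minus_iff)
  then show ?thesis using diff sum by blast
qed

lemma dvd_coeff_of_dvd_sum:
  fixes x c :: "'a \<Rightarrow> int"
  assumes "finite A" "j \<in> A" "coprime d (c j)" "d dvd (\<Sum>i\<in>A. x i * c i)"
    and others: "\<And>i. i \<in> A \<Longrightarrow> i \<noteq> j \<Longrightarrow> d dvd x i * c i"
  shows "d dvd x j"
proof -
  have "(\<Sum>i\<in>A. x i * c i) = x j * c j + (\<Sum>i\<in>A - {j}. x i * c i)"
    using assms(1,2) by (simp add: sum.remove)
  moreover have "d dvd (\<Sum>i\<in>A - {j}. x i * c i)"
    using others by (intro dvd_sum) auto
  ultimately have "d dvd x j * c j"
    using assms(4) by (metis add_diff_cancel_right' dvd_diff)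
  then show ?thesis using assms(3) by (simp add: coprime_dvd_mult_left_iff)
qed

lemma square_mod_shift:
  fixes x P k :: int
  shows "(x + 2 * P * k)\<^sup>2 mod (4 * P) = x\<^sup>2 mod (4 * P)"
proof -
  have "(x + 2 * P * k)\<^sup>2 - x\<^sup>2 = 4 * P * (x * k + P * k * k)"
    by (simp add: power2_eq_square algebra_simps)
  then show ?thesis by (simp add: mod_eq_dvd_iff)
qed

lemma signsE_values: "\<epsilon> \<in> signsE r \<Longrightarrow> j \<in> {1..r} \<Longrightarrow> \<epsilon> j \<in> {-1, 1}"
  unfolding signsE_def by auto

lemma p_dvd_bigP: "j \<in> {1..r} \<Longrightarrow> p j dvd bigP r p"
  unfolding bigP_def by (rule dvd_prodI) auto

lemma bigP_eq_mult_prod: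
  "j \<in> {1..r} \<Longrightarrow> bigP r p = p j * (\<Prod>k\<in>{1..r} - {j}. p k)"
  unfolding bigP_def by (rule prod.remove) auto

lemma phat_eq_prod:
  "j \<in> {1..r} \<Longrightarrow> p j \<noteq> 0 \<Longrightarrow> phat r p j = (\<Prod>k\<in>{1..r} - {j}. p k)"
  unfolding phat_def by (simp add: bigP_eq_mult_prod)

lemma p_mult_phat: "j \<in> {1..r} \<Longrightarrow> p j \<noteq> 0 \<Longrightarrow> p j * phat r p j = bigP r p"
  by (simp add: phat_eq_prod bigP_eq_mult_prod)

lemma p_dvd_phat:
  "i \<in> {1..r} \<Longrightarrow> j \<in> {1..r} \<Longrightarrow> i \<noteq> j \<Longrightarrow> p j \<noteq> 0 \<Longrightarrow> p i dvd phat r p j"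
  by (simp add: phat_eq_prod dvd_prodI)

lemma bigP_dvd_phat_mult:
  assumes "i \<in> {1..r}" "j \<in> {1..r}" "i \<noteq> j" "p i \<noteq> 0" "p j \<noteq> 0"
  shows "bigP r p dvd phat r p i * phat r p j"
proof -
  have "p i dvd phat r p j"
    using assms by (intro p_dvd_phat)
  then have "phat r p i * p i dvd phat r p i * phat r p j"
    by (rule mult_dvd_mono[OF dvd_refl])
  then show ?thesis
    using p_mult_phat[of i r p] assms(1,4) by (metis mult.commute)
qed

lemma coprime_p_phat:
  assumes "j \<in> {1..r}" "p j \<noteq> 0" "\<And>k. k \<in> {1..r} \<Longrightarrow> k \<noteq> j \<Longrightarrow> coprime (p j) (p k)"
  shows "coprime (p j) (phat r p j)"
proof -
  have "coprime (p j) (\<Prod>k\<in>{1..r} - {j}. p k)"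
    by (rule prod_coprime_right) (use assms(3) in auto)
  then show ?thesis
    using phat_eq_prod[of j r p] assms(1,2) by simp
qed

lemma odd_phat:
  assumes "j \<in> {1..r}" "p j \<noteq> 0" "\<And>k. k \<in> {1..r} \<Longrightarrow> k \<noteq> j \<Longrightarrow> odd (p k)"
  shows "odd (phat r p j)"
  using assms by (simp add: phat_eq_prod even_prod_iff)

lemma hsim_sym:
  assumes "hsim r p h h'"
  shows "hsim r p h' h"
proof -
  obtain J where "J \<subseteq> {1..r}" "even (card J)"
    "\<forall>j\<in>J. h j = p j - h' j" "\<forall>j\<in>{1..r} - J. h j = h' j"
    using assms unfolding hsim_def by blast
  then show ?thesis
    unfolding hsim_def by (intro exI[of _ J]) auto
qed

lemma hsim_trans:
  assumes "hsim r p h h'" "hsim r p h' h''"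
  shows "hsim r p h h''"
proof -
  obtain J1 where J1: "J1 \<subseteq> {1..r}" "even (card J1)"
    "\<forall>j\<in>J1. h j = p j - h' j" "\<forall>j\<in>{1..r} - J1. h j = h' j"
    using assms(1) unfolding hsim_def by blast
  obtain J2 where J2: "J2 \<subseteq> {1..r}" "even (card J2)"
    "\<forall>j\<in>J2. h' j = p j - h'' j" "\<forall>j\<in>{1..r} - J2. h' j = h'' j"
    using assms(2) unfolding hsim_def by blast
  define J where "J = (J1 - J2) \<union> (J2 - J1)"
  have "even (card J)"
    unfolding J_def using J1(1,2) J2(1,2) by (intro even_card_sym_diff) (auto intro: finite_subset)
  moreover have "J \<subseteq> {1..r}"
    unfolding J_def using J1(1) J2(1) by blast
  moreover have "h j = p j - h'' j" if j: "j \<in> J" for j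
  proof -
    consider "j \<in> J1 - J2" | "j \<in> J2 - J1"
      using j unfolding J_def by blast
    then show ?thesis
    proof cases
      case 1
      then have "j \<in> {1..r} - J2"
        using J1(1) by blast
      then show ?thesis
        using 1 J1(3) J2(4) by simp
    next
      case 2
      then have "j \<in> {1..r} - J1"
        using J2(1) by blast
      then show ?thesis
        using 2 J1(4) J2(3) by simp
    qed
  qed
  moreover have "h j = h'' j" if j: "j \<in> {1..r} - J" for j
  proof -
    consider "j \<in> J1 \<inter> J2" | "j \<in> {1..r} - J1 - J2"
      using j unfolding J_def by blast
    then show ?thesis
    proof cases
      case 1
      then show ?thesis
        using J1(3) J2(3) by simp
    next
      case 2
      then show ?thesis
        using J1(4) J2(4) by simp
    qed
  qed
  ultimately show ?thesis
    unfolding hsim_def by (intro exI[of _ J]) blast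
qed

lemma hsim_Jset_eq:
  assumes "hsim r p h h'"
  shows "Jset r p h = Jset r p h'"
proof -
  obtain J where J: "\<forall>j\<in>J. h j = p j - h' j" "\<forall>j\<in>{1..r} - J. h j = h' j"
    using assms unfolding hsim_def by blast
  have "p j dvd h j \<longleftrightarrow> p j dvd h' j" if "j \<in> {1..r}" for j
    using J that by (cases "j \<in> J") (auto simp: dvd_diff_right_iff)
  then show ?thesis
    unfolding Jset_def by blast
qed

lemma hsim_frakS_subset:
  assumes sim: "hsim r p h h'" and nonzero: "\<forall>j\<in>{1..r}. p j \<noteq> 0"
  shows "frakS r p h \<subseteq> frakS r p h'"
proof
  fix m assume "m \<in> frakS r p h"
  then obtain \<epsilon> k where \<epsilon>: "\<epsilon> \<in> signsE r" and m: "m = calN r p h \<epsilon> + 2 * bigP r p * k"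
    unfolding frakS_def by blast
  obtain J where J: "J \<subseteq> {1..r}" "even (card J)"
    "\<forall>j\<in>J. h j = p j - h' j" "\<forall>j\<in>{1..r} - J. h j = h' j"
    using sim unfolding hsim_def by blast
  define \<epsilon>' where "\<epsilon>' = (\<lambda>j. if j \<in> J then - \<epsilon> j else \<epsilon> j)"
  have \<epsilon>': "\<epsilon>' \<in> signsE r"
    using \<epsilon> J(1) unfolding signsE_def \<epsilon>'_def by (auto simp: PiE_iff extensional_def)
  have summand: "\<epsilon> j * h j * phat r p j
      = \<epsilon>' j * h' j * phat r p j + (if j \<in> J then \<epsilon> j * bigP r p else 0)"
    if j: "j \<in> {1..r}" for j
  proof (cases "j \<in> J")
    case True
    then have hj: "h j = p j - h' j"
      using J(3) by blast
    have "\<epsilon> j * h j * phat r p j = \<epsilon> j * (p j * phat r p j) - \<epsilon> j * h' j * phat r p j"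
      unfolding hj by (simp add: algebra_simps)
    then show ?thesis
      using True j nonzero by (simp add: \<epsilon>'_def p_mult_phat)
  qed (use J(4) j in \<open>simp add: \<epsilon>'_def\<close>)
  have "calN r p h \<epsilon> = calN r p h' \<epsilon>' + (\<Sum>j\<in>{1..r}. if j \<in> J then \<epsilon> j * bigP r p else 0)"
    unfolding calN_def using summand by (simp add: sum.distrib)
  also have "(\<Sum>j\<in>{1..r}. if j \<in> J then \<epsilon> j * bigP r p else 0) = bigP r p * (\<Sum>j\<in>J. \<epsilon> j)"
    using J(1) by (simp add: sum.inter_restrict[symmetric] Int_absorb1 sum_distrib_left mult.commute)
  finally have N: "calN r p h \<epsilon> = calN r p h' \<epsilon>' + bigP r p * (\<Sum>j\<in>J. \<epsilon> j)" .
  have "finite J" "\<And>j. j \<in> J \<Longrightarrow> \<epsilon> j \<in> {-1, 1}"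
    using J(1) signsE_values[OF \<epsilon>] finite_subset by blast+
  then have "even (\<Sum>j\<in>J. \<epsilon> j)"
    using J(2) by (rule even_sum_signs)
  then obtain s where "(\<Sum>j\<in>J. \<epsilon> j) = 2 * s"
    by blast
  then have "m = calN r p h' \<epsilon>' + 2 * bigP r p * (s + k)"
    using m N by (simp add: algebra_simps)
  then show "m \<in> frakS r p h'"
    unfolding frakS_def using \<epsilon>' by blast
qed

lemma hsim_frakS_eq:
  "hsim r p h h' \<Longrightarrow> \<forall>j\<in>{1..r}. p j \<noteq> 0 \<Longrightarrow> frakS r p h = frakS r p h'"
  by (metis hsim_frakS_subset hsim_sym subset_antisym)

lemma calN_square_mod_eq:
  assumes \<epsilon>: "\<epsilon> \<in> signsE r" and nonzero: "\<forall>j\<in>{1..r}. p j \<noteq> 0"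
  shows "(calN r p h \<epsilon>)\<^sup>2 mod (4 * bigP r p) = (calN r p h (\<lambda>j\<in>{1..r}. 1))\<^sup>2 mod (4 * bigP r p)"
proof -
  define F where "F = {j\<in>{1..r}. \<epsilon> j = -1}"
  define G where "G = {1..r} - F"
  define A where "A = (\<Sum>j\<in>F. h j * phat r p j)"
  define R where "R = (\<Sum>j\<in>G. h j * phat r p j)"
  have "F \<subseteq> {1..r}"
    unfolding F_def by blast
  then have split: "(\<Sum>j\<in>{1..r}. f j) = (\<Sum>j\<in>G. f j) + (\<Sum>j\<in>F. f j)" for f :: "nat \<Rightarrow> int"
    unfolding G_def by (simp add: sum.subset_diff)
  have "(\<Sum>j\<in>F. \<epsilon> j * h j * phat r p j) = - A"
    unfolding A_def F_def by (simp add: sum_negf[symmetric])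
  moreover have "(\<Sum>j\<in>G. \<epsilon> j * h j * phat r p j) = R"
    unfolding R_def G_def F_def using signsE_values[OF \<epsilon>] by (intro sum.cong) auto
  ultimately have N\<epsilon>: "calN r p h \<epsilon> = bigP r p + R - A"
    unfolding calN_def split[of "\<lambda>j. \<epsilon> j * h j * phat r p j"] by simp
  have N1: "calN r p h (\<lambda>j\<in>{1..r}. 1) = bigP r p + R + A"
    unfolding calN_def A_def R_def split[of "\<lambda>j. (\<lambda>j\<in>{1..r}. 1) j * h j * phat r p j"]
    by (simp add: G_def F_def)
  have "bigP r p dvd A * R"
    unfolding A_def R_def sum_product
  proof (intro dvd_sum)
    fix i j assume "i \<in> F" "j \<in> G"
    then have "bigP r p dvd phat r p i * phat r p j"
      using nonzero unfolding F_def G_def by (intro bigP_dvd_phat_mult) auto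
    then show "bigP r p dvd h i * phat r p i * (h j * phat r p j)"
      by (simp add: dvd_mult mult.left_commute mult.assoc)
  qed
  then have "4 * bigP r p dvd (bigP r p + R + A)\<^sup>2 - (bigP r p + R - A)\<^sup>2"
    by (simp add: power2_eq_square algebra_simps)
  then show ?thesis
    unfolding N\<epsilon> N1 by (simp add: mod_eq_dvd_iff dvd_diff_commute)
qed

lemma frakS_square_mod_const:
  assumes "\<forall>j\<in>{1..r}. p j \<noteq> 0"
  shows "\<exists>c. \<forall>m\<in>frakS r p h. m\<^sup>2 mod (4 * bigP r p) = c"
proof (intro exI ballI)
  fix m assume "m \<in> frakS r p h"
  then obtain \<epsilon> k where "\<epsilon> \<in> signsE r" "m = calN r p h \<epsilon> + 2 * bigP r p * k"
    unfolding frakS_def by blast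
  then show "m\<^sup>2 mod (4 * bigP r p) = (calN r p h (\<lambda>j\<in>{1..r}. 1))\<^sup>2 mod (4 * bigP r p)"
    using assms by (simp add: square_mod_shift calN_square_mod_eq)
qed

lemma hsim_frakH:
  assumes h: "h \<in> frakH r p" and sim: "hsim r p h l" and l: "l \<in> extensional {1..r}"
  shows "l \<in> frakH r p"
proof -
  obtain J where J: "\<forall>j\<in>J. h j = p j - l j" "\<forall>j\<in>{1..r} - J. h j = l j"
    using sim unfolding hsim_def by blast
  have "0 \<le> l j \<and> l j \<le> p j" if j: "j \<in> {1..r}" for j
  proof -
    have "0 \<le> h j \<and> h j \<le> p j"
      using h j unfolding frakH_def by blast
    moreover have "h j = p j - l j \<or> h j = l j"
      using J j by blast
    ultimately show ?thesis
      by linarith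
  qed
  moreover have "{j\<in>{1..r}. \<not> p j dvd l j} = {1..r} - Jset r p l"
    unfolding Jset_def by blast
  moreover have "{j\<in>{1..r}. \<not> p j dvd h j} = {1..r} - Jset r p h"
    unfolding Jset_def by blast
  ultimately show ?thesis
    using h l hsim_Jset_eq[OF sim] unfolding frakH_def by auto
qed

lemma frakL_representative_exists:
  assumes odd: "\<forall>j\<in>{2..r}. odd (p j)" and h: "h \<in> frakH r p"
  shows "\<exists>l\<in>frakL r p. hsim r p h l"
proof -
  have "3 \<le> card {j\<in>{1..r}. \<not> p j dvd h j}"
    using h unfolding frakH_def by blast
  then have "{j\<in>{1..r}. \<not> p j dvd h j} \<noteq> {}"
    by (metis card.empty not_numeral_le_zero)
  then have one: "1 \<in> {1..r}"
    by auto
  define Odd where "Odd = {j\<in>{2..r}. odd (h j)}"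
  define J where "J = (if even (card Odd) then Odd else insert 1 Odd)"
  define l where "l = (\<lambda>j\<in>{1..r}. if j \<in> J then p j - h j else h j)"
  have "finite Odd" "1 \<notin> Odd"
    unfolding Odd_def by auto
  then have "even (card J)"
    unfolding J_def by auto
  moreover have "J \<subseteq> {1..r}"
    unfolding J_def Odd_def using one by auto
  ultimately have sim: "hsim r p h l"
    unfolding hsim_def l_def by (intro exI[of _ J]) auto
  have J_high: "j \<in> J \<longleftrightarrow> odd (h j)" if "j \<in> {2..r}" for j
    using that unfolding J_def Odd_def by auto
  have "even (l j)" if j: "j \<in> {2..r}" for j
    using J_high[OF j] odd j unfolding l_def by auto
  moreover have "l \<in> frakH r p"
    using hsim_frakH[OF h sim] unfolding l_def by simp
  ultimately have "l \<in> frakL r p"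
    unfolding frakL_def by blast
  then show ?thesis
    using sim by blast
qed

lemma frakL_hsim_eq:
  assumes odd: "\<forall>j\<in>{2..r}. odd (p j)"
    and l: "l \<in> frakL r p" and l': "l' \<in> frakL r p" and sim: "hsim r p l l'"
  shows "l = l'"
proof -
  obtain J where J: "J \<subseteq> {1..r}" "even (card J)"
    "\<forall>j\<in>J. l j = p j - l' j" "\<forall>j\<in>{1..r} - J. l j = l' j"
    using sim unfolding hsim_def by blast
  have "J \<subseteq> {1}"
  proof
    fix j assume j: "j \<in> J"
    show "j \<in> {1}"
    proof (rule ccontr)
      assume "j \<notin> {1}"
      then have "j \<in> {2..r}"
        using j J(1) by auto
      then have "even (l j)" "even (l' j)" "odd (p j)"
        using l l' odd unfolding frakL_def by auto
      moreover have "p j = l j + l' j"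
        using J(3) j by simp
      ultimately show False
        by simp
    qed
  qed
  then have "J = {}"
    using J(2) by (auto simp: subset_singleton_iff)
  then have "\<forall>j\<in>{1..r}. l j = l' j"
    using J(4) by simp
  moreover have "l \<in> extensional {1..r}" "l' \<in> extensional {1..r}"
    using l l' unfolding frakL_def frakH_def by auto
  ultimately show ?thesis
    by (intro extensionalityI) auto
qed

lemma frakL_unique_representative:
  assumes "\<forall>j\<in>{2..r}. odd (p j)" "h \<in> frakH r p"
  shows "\<exists>!l. l \<in> frakL r p \<and> hsim r p h l"
proof -
  obtain l where l: "l \<in> frakL r p" "hsim r p h l"
    using frakL_representative_exists[OF assms] by blast
  have "l' = l" if "l' \<in> frakL r p" "hsim r p h l'" for l'
    using frakL_hsim_eq[OF assms(1) that(1) l(1)] hsim_trans[OF hsim_sym[OF that(2)] l(2)] .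
  then show ?thesis
    using l by blast
qed

lemma frakS_common_element_dvd:
  assumes "m \<in> frakS r p l" "m \<in> frakS r p l'"
  obtains \<epsilon> \<epsilon>' where "\<epsilon> \<in> signsE r" "\<epsilon>' \<in> signsE r"
    "2 * bigP r p dvd (\<Sum>j\<in>{1..r}. (\<epsilon> j * l j - \<epsilon>' j * l' j) * phat r p j)"
proof -
  obtain \<epsilon> k where \<epsilon>: "\<epsilon> \<in> signsE r" and m: "m = calN r p l \<epsilon> + 2 * bigP r p * k"
    using assms(1) unfolding frakS_def by blast
  obtain \<epsilon>' k' where \<epsilon>': "\<epsilon>' \<in> signsE r" and m': "m = calN r p l' \<epsilon>' + 2 * bigP r p * k'"
    using assms(2) unfolding frakS_def by blast
  have "(\<Sum>j\<in>{1..r}. (\<epsilon> j * l j - \<epsilon>' j * l' j) * phat r p j) = calN r p l \<epsilon> - calN r p l' \<epsilon>'"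
    unfolding calN_def by (simp add: left_diff_distrib sum_subtractf)
  also have "\<dots> = 2 * bigP r p * (k' - k)"
    using m m' by (simp add: algebra_simps)
  finally show ?thesis
    using that \<epsilon> \<epsilon>' by (metis dvd_triv_left)
qed

context
  fixes r :: nat and p l l' \<epsilon> \<epsilon>' :: "nat \<Rightarrow> int"
  assumes nonzero: "\<forall>j\<in>{1..r}. p j \<noteq> 0"
    and coprime: "\<forall>i\<in>{1..r}. \<forall>j\<in>{1..r}. i \<noteq> j \<longrightarrow> coprime (p i) (p j)"
    and odd: "\<forall>j\<in>{2..r}. odd (p j)"
    and l: "l \<in> frakL r p" and l': "l' \<in> frakL r p"
    and \<epsilon>: "\<epsilon> \<in> signsE r" and \<epsilon>': "\<epsilon>' \<in> signsE r"
    and dvd_sum: "2 * bigP r p dvd (\<Sum>j\<in>{1..r}. (\<epsilon> j * l j - \<epsilon>' j * l' j) * phat r p j)"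
begin

lemma coord_eq_if_double_p_dvd:
  assumes j: "j \<in> {1..r}" and dvd: "2 * p j dvd \<epsilon> j * l j - \<epsilon>' j * l' j"
  shows "l j = l' j"
proof (rule signed_eq_if_double_dvd[OF _ _ _ _ _ _ dvd])
  show "0 \<le> l j" "l j \<le> p j" "0 \<le> l' j" "l' j \<le> p j"
    using l l' j unfolding frakL_def frakH_def by blast+
  show "\<epsilon> j \<in> {-1, 1}" "\<epsilon>' j \<in> {-1, 1}"
    using signsE_values \<epsilon> \<epsilon>' j by blast+
qed

lemma coord_eq_high:
  assumes j: "j \<in> {2..r}"
  shows "l j = l' j"
proof -
  have j1: "j \<in> {1..r}"
    using j by auto
  have "p j dvd \<epsilon> j * l j - \<epsilon>' j * l' j"
  proof (rule dvd_coeff_of_dvd_sum[of "{1..r}"])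
    show "coprime (p j) (phat r p j)"
      using j1 coprime nonzero by (intro coprime_p_phat) auto
    have "p j dvd 2 * bigP r p"
      using p_dvd_bigP[OF j1] by simp
    then show "p j dvd (\<Sum>i\<in>{1..r}. (\<epsilon> i * l i - \<epsilon>' i * l' i) * phat r p i)"
      using dvd_sum dvd_trans by blast
    show "p j dvd (\<epsilon> i * l i - \<epsilon>' i * l' i) * phat r p i" if "i \<in> {1..r}" "i \<noteq> j" for i
      using that j1 nonzero by (simp add: p_dvd_phat)
  qed (use j1 in auto)
  moreover have "even (l j)" "even (l' j)"
    using l l' j unfolding frakL_def by blast+
  then have "2 dvd \<epsilon> j * l j - \<epsilon>' j * l' j"
    by simp
  ultimately have "2 * p j dvd \<epsilon> j * l j - \<epsilon>' j * l' j"
    using odd j by (intro divides_mult) auto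
  then show ?thesis
    using coord_eq_if_double_p_dvd j1 by blast
qed

text \<open>Once the coordinates \<open>j \<ge> 2\<close> agree, their summands carry the even factor
  \<open>\<epsilon> j - \<epsilon>' j\<close>, so the first coordinate can be isolated modulo \<open>2 p 1\<close>.\<close>
lemma coord_eq_one:
  assumes one: "1 \<in> {1..r}"
  shows "l 1 = l' 1"
proof -
  have "2 * p 1 dvd \<epsilon> 1 * l 1 - \<epsilon>' 1 * l' 1"
  proof (rule dvd_coeff_of_dvd_sum[of "{1..r}"])
    show "coprime (2 * p 1) (phat r p 1)"
      using coprime_p_phat[of 1 r p] odd_phat[of 1 r p] one coprime odd nonzero by auto
    have "2 * p 1 dvd 2 * bigP r p"
      using p_dvd_bigP[OF one] by simp
    then show "2 * p 1 dvd (\<Sum>i\<in>{1..r}. (\<epsilon> i * l i - \<epsilon>' i * l' i) * phat r p i)"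
      using dvd_sum dvd_trans by blast
    show "2 * p 1 dvd (\<epsilon> i * l i - \<epsilon>' i * l' i) * phat r p i" if i: "i \<in> {1..r}" "i \<noteq> 1" for i
    proof -
      have "l' i = l i"
        using coord_eq_high[of i] i by simp
      then have "(\<epsilon> i * l i - \<epsilon>' i * l' i) * phat r p i = (\<epsilon> i - \<epsilon>' i) * phat r p i * l i"
        by (simp add: algebra_simps)
      moreover have "2 dvd \<epsilon> i - \<epsilon>' i"
        using signsE_values[OF \<epsilon> i(1)] signsE_values[OF \<epsilon>' i(1)] by auto
      moreover have "p 1 dvd phat r p i"
        using i one nonzero by (simp add: p_dvd_phat)
      ultimately show ?thesis
        using mult_dvd_mono dvd_mult2 by metis
    qed
  qed (use one in auto)
  then show ?thesis
    using coord_eq_if_double_p_dvd one by blast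
qed

lemma frakL_eq_if_dvd_sum: "l = l'"
proof (rule extensionalityI)
  show "l \<in> extensional {1..r}" "l' \<in> extensional {1..r}"
    using l l' unfolding frakL_def frakH_def by auto
  show "l j = l' j" if "j \<in> {1..r}" for j
    using that coord_eq_high coord_eq_one by (cases "j = 1") auto
qed

end

lemma frakL_eq_if_frakS_intersect:
  assumes "\<forall>j\<in>{1..r}. p j \<noteq> 0"
    and "\<forall>i\<in>{1..r}. \<forall>j\<in>{1..r}. i \<noteq> j \<longrightarrow> coprime (p i) (p j)"
    and "\<forall>j\<in>{2..r}. odd (p j)"
    and "l \<in> frakL r p" "l' \<in> frakL r p"
    and "m \<in> frakS r p l" "m \<in> frakS r p l'"
  shows "l = l'"
  using frakS_common_element_dvd[OF assms(6,7)] frakL_eq_if_dvd_sum[OF assms(1-5)] by blast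

theorem lemmaB2:
  fixes r :: nat and p :: "nat \<Rightarrow> int"
  assumes r3: "r \<ge> 3"
    and ppos: "\<forall>j\<in>{1..r}. p j > 0"
    and pcop: "\<forall>i\<in>{1..r}. \<forall>j\<in>{1..r}. i \<noteq> j \<longrightarrow> coprime (p i) (p j)"
    and podd: "\<forall>j\<in>{2..r}. odd (p j)"
  shows "(frakL r p \<subseteq> frakH r p \<and>
          (\<forall>h\<in>frakH r p. \<exists>!l. l \<in> frakL r p \<and> hsim r p h l))
       \<and> (\<forall>h\<in>frakH r p. \<forall>h'\<in>frakH r p. hsim r p h h' \<longrightarrow>
            Jset r p h = Jset r p h' \<and> frakS r p h = frakS r p h')
       \<and> (\<forall>l\<in>frakL r p. \<forall>l'\<in>frakL r p. l \<noteq> l' \<longrightarrow> frakS r p l \<inter> frakS r p l' = {})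
       \<and> (\<forall>l\<in>frakL r p. \<exists>c. \<forall>m\<in>frakS r p l. m\<^sup>2 mod (4 * bigP r p) = c)"
proof -
  have nonzero: "\<forall>j\<in>{1..r}. p j \<noteq> 0"
    using ppos by (metis less_irrefl)
  have "frakL r p \<subseteq> frakH r p"
    unfolding frakL_def by blast
  moreover have "\<forall>h\<in>frakH r p. \<exists>!l. l \<in> frakL r p \<and> hsim r p h l"
    using frakL_unique_representative podd by blast
  moreover have "\<forall>h\<in>frakH r p. \<forall>h'\<in>frakH r p. hsim r p h h' \<longrightarrow>
      Jset r p h = Jset r p h' \<and> frakS r p h = frakS r p h'"
    using hsim_Jset_eq hsim_frakS_eq nonzero by blast
  moreover have "\<forall>l\<in>frakL r p. \<forall>l'\<in>frakL r p. l \<noteq> l' \<longrightarrow> frakS r p l \<inter> frakS r p l' = {}"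
    using frakL_eq_if_frakS_intersect[OF nonzero pcop podd] by blast
  moreover have "\<forall>l\<in>frakL r p. \<exists>c. \<forall>m\<in>frakS r p l. m\<^sup>2 mod (4 * bigP r p) = c"
    using frakS_square_mod_const nonzero by blast
  ultimately show ?thesis
    by blast
qed

end
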